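(* Let $n\geqslant 2$, let $C=\{x,y,e_1,\ldots,e_n\}$ and let $U$ be the set of monoid relations on $C$: (U1) $e_i^2=e_i$ for $1\leqslant i\leqslant n$; (U2) $xy=e_n$ and $yx=e_1$; (U3) $xe_1=x$ and $e_1y=y$; (U4) $e_ie_j=e_je_i$ for $1\leqslant i<j\leqslant n$; (U5) $xe_{i+1}=e_ix$ for $1\leqslant i\leqslant n-1$; (U6) $xe_2\cdots e_n=e_1e_2\cdots e_n$. Then $\langle C\mid U\rangle$ is a monoid presentation of $\mathcal{OCI}_n$ (with respect to the map sending each letter to the transformation of the same name). It has $n+2$ generators and $\frac12(n^2+3n+8)$ relations.
   Context: Let $\Omega_n=\{1<\cdots<n\}$, $\mathcal{I}_n$ the symmetric inverse monoid on $\Omega_n$ (maps on the right, composed left to right). $g$ is the permutation $ig=i+1$ ($1\leqslant i\leqslant n-1$), $ng=1$; $\mathcal{C}_n=\{1,g,\ldots,g^{n-1}\}$; $\mathcal{CI}_n=\{\alpha\in\mathcal{I}_n\mid \alpha=\sigma|_{\mathrm{Dom}(\alpha)}\text{ for some }\sigma\in\mathcal{C}_n\}$; $\mathcal{OCI}_n$ is the submonoid of order-preserving elements of $\mathcal{CI}_n$. $e_i$ is the partial identity on $\Omega_n\setminus\{i\}$; $x$ has domain $\{1,\ldots,n-1\}$ with $ix=i+1$; $y=x^{-1}$ has domain $\{2,\ldots,n\}$ with $iy=i-1$. A presentation $\langle C\mid U\rangle$ defines $M$ via an injective map $C\to M$ whose image generates $M$ if the kernel of the induced homomorphism $C^*\to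 M$ is the smallest congruence on $C^*$ containing $U$. *)

theory Defs
  imports Main
begin

text \<open>Maps act on the right and are composed left to right: \<open>pcomp a b\<close> is
  "first a, then b".\<close>

definition pcomp :: "(nat \<rightharpoonup> nat) \<Rightarrow> (nat \<rightharpoonup> nat) \<Rightarrow> (nat \<rightharpoonup> nat)" where
  "pcomp a b = b \<circ>\<^sub>m a"

definition pid :: "nat \<Rightarrow> (nat \<rightharpoonup> nat)" where
  "pid n = (\<lambda>i. if i \<in> {1..n} then Some i else None)"

definition SymInv :: "nat \<Rightarrow> (nat \<rightharpoonup> nat) set" where
  "SymInv n = {a. dom a \<subseteq> {1..n} \<and> ran a \<subseteq> {1..n} \<and> inj_on a (dom a)}"

text \<open>The power \<open>g^k\<close> of the cycle \<open>g = (1 2 ... n)\<close>, as a function on \<open>{1..n}\<close>.\<close>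
definition gpow :: "nat \<Rightarrow> nat \<Rightarrow> nat \<Rightarrow> nat" where
  "gpow n k i = ((i - 1 + k) mod n) + 1"

definition CycGrp :: "nat \<Rightarrow> (nat \<Rightarrow> nat) set" where
  "CycGrp n = {gpow n k | k. k < n}"

definition CI :: "nat \<Rightarrow> (nat \<rightharpoonup> nat) set" where
  "CI n = {a \<in> SymInv n. \<exists>\<sigma> \<in> CycGrp n.
             a = (\<lambda>i. if i \<in> dom a then Some (\<sigma> i) else None)}"

definition OCI :: "nat \<Rightarrow> (nat \<rightharpoonup> nat) set" where
  "OCI n = {a \<in> CI n. \<forall>i \<in> dom a. \<forall>j \<in> dom a. i \<le> j \<longrightarrow> the (a i) \<le> the (a j)}"

definition te :: "nat \<Rightarrow> nat \<Rightarrow> (nat \<rightharpoonup> nat)" where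
  "te n k = (\<lambda>i. if i \<in> {1..n} - {k} then Some i else None)"

definition tx :: "nat \<Rightarrow> (nat \<rightharpoonup> nat)" where
  "tx n = (\<lambda>i. if i \<in> {1..n-1} then Some (i + 1) else None)"

definition ty :: "nat \<Rightarrow> (nat \<rightharpoonup> nat)" where
  "ty n = (\<lambda>i. if i \<in> {2..n} then Some (i - 1) else None)"

datatype letter = X | Y | E nat

definition alphabet :: "nat \<Rightarrow> letter set" where
  "alphabet n = {X, Y} \<union> E ` {1..n}"

fun letter_map :: "nat \<Rightarrow> letter \<Rightarrow> (nat \<rightharpoonup> nat)" where
  "letter_map n X = tx n"
| "letter_map n Y = ty n"
| "letter_map n (E i) = te n i"

definition word_eval :: "nat \<Rightarrow> letter list \<Rightarrow> (nat \<rightharpoonup> nat)" where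
  "word_eval n w = foldl (\<lambda>a c. pcomp a (letter_map n c)) (pid n) w"

inductive gen_cong :: "'a set \<Rightarrow> ('a list \<times> 'a list) set \<Rightarrow> 'a list \<Rightarrow> 'a list \<Rightarrow> bool"
  for A R where
  base: "(u, v) \<in> R \<Longrightarrow> gen_cong A R u v"
| refl: "w \<in> lists A \<Longrightarrow> gen_cong A R w w"
| sym: "gen_cong A R u v \<Longrightarrow> gen_cong A R v u"
| trans: "gen_cong A R u v \<Longrightarrow> gen_cong A R v w \<Longrightarrow> gen_cong A R u w"
| ctxt: "gen_cong A R u v \<Longrightarrow> p \<in> lists A \<Longrightarrow> q \<in> lists A \<Longrightarrow> gen_cong A R (p @ u @ q) (p @ v @ q)"

definition relsU :: "nat \<Rightarrow> (letter list \<times> letter list) set" where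
  "relsU n =
     {([E i, E i], [E i]) | i. 1 \<le> i \<and> i \<le> n}
   \<union> {([X, Y], [E n]), ([Y, X], [E 1])}
   \<union> {([X, E 1], [X]), ([E 1, Y], [Y])}
   \<union> {([E i, E j], [E j, E i]) | i j. 1 \<le> i \<and> i < j \<and> j \<le> n}
   \<union> {([X, E (i + 1)], [E i, X]) | i. 1 \<le> i \<and> i \<le> n - 1}
   \<union> {(X # map E [2..<n+1], map E [1..<n+1])}"

definition is_presentation ::
  "'a set \<Rightarrow> ('a list \<times> 'a list) set \<Rightarrow> ('a \<Rightarrow> 'm) \<Rightarrow> ('a list \<Rightarrow> 'm) \<Rightarrow> 'm set \<Rightarrow> bool" where
  "is_presentation C U f ev M \<longleftrightarrow>
     U \<subseteq> lists C \<times> lists C \<and>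
     inj_on f C \<and> ev ` lists C = M \<and>
     {(u, v). u \<in> lists C \<and> v \<in> lists C \<and> ev u = ev v} = {(u, v). gen_cong C U u v}"

end

theory Submission
  imports Defs
begin

text \<open>
  Modulo the relations \<open>U\<close> the \<open>e\<^sub>i\<close> are commuting idempotents, \<open>x\<close> and \<open>y\<close> move
  them past themselves while shifting indices by one, and \<open>x\<^sup>k\<close> (resp. \<open>y\<^sup>k\<close>) absorbs the
  \<open>e\<^sub>i\<close> whose index lies outside its image. Hence every word is congruent to a normal form
  \<open>x\<^sup>k e\<^sub>S\<close> or \<open>y\<^sup>k e\<^sub>S\<close>, where \<open>e\<^sub>S\<close> is the increasing product of the \<open>e\<^sub>i\<close>, \<open>i \<in> S\<close>,
  and all words equal to the zero \<open>e\<^sub>1 \<cdots> e\<^sub>n\<close> are collapsed. Conversely, the normal forms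
  evaluate to the pairwise distinct maps \<open>i \<mapsto> i \<plusminus> k\<close> with holes at \<open>S\<close>, and these are all
  of \<open>OCI\<^sub>n\<close>: an order-preserving restriction of a rotation \<open>g\<^sup>k\<close> cannot wrap around
  \<open>n\<close>.
\<close>

lemma sorted_list_of_set_set_id:
  "sorted s \<Longrightarrow> distinct s \<Longrightarrow> sorted_list_of_set (set s) = s"
  by (simp add: sorted_list_of_set_sort_remdups distinct_remdups_id sorted_sort_id)

lemma sorted_list_of_set_atLeastAtMost: "sorted_list_of_set {a..b} = [a..<Suc b]"
  by (metis atLeastLessThanSuc_atLeastAtMost sorted_list_of_set_range)

lemma set_map_Suc_filter_less:
  "set s \<subseteq> {1..n} \<Longrightarrow> set (map Suc (filter (\<lambda>i. i < n) s)) \<subseteq> {1..n}"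
  by (auto simp: subset_iff)

lemma set_map_pred_filter_greater:
  assumes "set s \<subseteq> {1..n::nat}"
  shows "set (map (\<lambda>i. i - 1) (filter (\<lambda>i. 1 < i) s)) \<subseteq> {1..n}"
proof -
  from assms have "\<forall>i \<in> set s. 1 < i \<longrightarrow> 1 \<le> i - 1 \<and> i - 1 \<le> n"
    by auto
  then show ?thesis
    by auto
qed

section \<open>Congruences generated by relations\<close>

context
  fixes A :: "'a set" and R :: "('a list \<times> 'a list) set"
  assumes rels_in_lists: "R \<subseteq> lists A \<times> lists A"
begin

lemma gen_cong_in_lists: "gen_cong A R u v \<Longrightarrow> u \<in> lists A \<and> v \<in> lists A"
  by (induction rule: gen_cong.induct) (use rels_in_lists in auto)

lemma gen_cong_append: "gen_cong A R u v \<Longrightarrow> gen_cong A R u' v' \<Longrightarrow> gen_cong A R (u @ u') (v @ v')"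
proof -
  assume uv: "gen_cong A R u v" and uv': "gen_cong A R u' v'"
  have "gen_cong A R ([] @ u @ u') ([] @ v @ u')"
    by (rule gen_cong.ctxt[OF uv]) (use gen_cong_in_lists[OF uv'] in auto)
  moreover have "gen_cong A R (v @ u' @ []) (v @ v' @ [])"
    by (rule gen_cong.ctxt[OF uv']) (use gen_cong_in_lists[OF uv] in auto)
  ultimately show ?thesis
    by (auto intro: gen_cong.trans)
qed

context
  fixes f :: "'b::linorder \<Rightarrow> 'a" and I :: "'b set"
  assumes letters: "f ` I \<subseteq> A"
    and idem: "\<And>i. i \<in> I \<Longrightarrow> gen_cong A R [f i, f i] [f i]"
    and comm: "\<And>i j. i \<in> I \<Longrightarrow> j \<in> I \<Longrightarrow> gen_cong A R [f i, f j] [f j, f i]"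
begin

lemma gen_cong_map_refl: "set l \<subseteq> I \<Longrightarrow> gen_cong A R (map f l) (map f l)"
  using letters by (intro gen_cong.refl) (auto simp: in_lists_conv_set)

lemma gen_cong_Cons_sorted:
  "sorted s \<Longrightarrow> distinct s \<Longrightarrow> set s \<subseteq> I \<Longrightarrow> a \<in> I \<Longrightarrow>
    gen_cong A R (f a # map f s) (map f (sorted_list_of_set (insert a (set s))))"
proof (induction s)
  case Nil
  then show ?case using gen_cong_map_refl[of "[a]"] by simp
next
  case (Cons b s)
  have b_min: "\<forall>c \<in> set s. b < c"
    using Cons.prems(1,2) by (auto simp: order.order_iff_strict)
  consider "a = b" | "a < b" | "b < a" by fastforce
  then show ?case
  proof cases
    case 1
    have "gen_cong A R ([f a, f a] @ map f s) ([f a] @ map f s)"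
      using gen_cong_append[OF idem gen_cong_map_refl] Cons.prems by auto
    moreover have "sorted_list_of_set (insert a (set (b # s))) = b # s"
      using 1 Cons.prems by (metis insert_absorb list.set_intros(1) sorted_list_of_set_set_id)
    ultimately show ?thesis
      using 1 by simp
  next
    case 2
    then have "sorted_list_of_set (insert a (set (b # s))) = a # b # s"
      using Cons.prems b_min by (subst sorted_list_of_set_set_id[symmetric]) auto
    then show ?thesis
      using gen_cong_map_refl[of "a # b # s"] Cons.prems by simp
  next
    case 3
    have "gen_cong A R ([f a, f b] @ map f s) ([f b, f a] @ map f s)"
      using gen_cong_append[OF comm gen_cong_map_refl] Cons.prems by auto
    moreover have "gen_cong A R ([f b] @ f a # map f s)
                     ([f b] @ map f (sorted_list_of_set (insert a (set s))))"
      using gen_cong_append[OF gen_cong_map_refl Cons.IH, of "[b]"] Cons.prems by auto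
    moreover have "sorted_list_of_set (insert a (set (b # s)))
                     = b # sorted_list_of_set (insert a (set s))"
      using 3 b_min Cons.prems
      by (intro sorted_distinct_set_unique) (auto simp del: sorted_list_of_set_insert_remove)
    ultimately show ?thesis
      by (auto intro: gen_cong.trans)
  qed
qed

lemma gen_cong_map_sorted_list_of_set:
  "set l \<subseteq> I \<Longrightarrow> gen_cong A R (map f l) (map f (sorted_list_of_set (set l)))"
proof (induction l)
  case Nil
  then show ?case using gen_cong_map_refl[of "[]"] by simp
next
  case (Cons a l)
  have "gen_cong A R ([f a] @ map f l) ([f a] @ map f (sorted_list_of_set (set l)))"
    using gen_cong_append[OF gen_cong_map_refl Cons.IH, of "[a]"] Cons.prems by auto
  with gen_cong_Cons_sorted[of "sorted_list_of_set (set l)" a] Cons.prems show ?case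
    by (auto intro: gen_cong.trans)
qed

end

end

lemma is_presentationI_normal_forms:
  assumes rels: "U \<subseteq> lists C \<times> lists C"
    and inj: "inj_on f C"
    and sound: "\<And>u v. gen_cong C U u v \<Longrightarrow> ev u = ev v"
    and normalize: "\<And>w. w \<in> lists C \<Longrightarrow> \<exists>w' \<in> N. gen_cong C U w w'"
    and inj_normal: "inj_on ev N"
    and range: "ev ` N \<subseteq> M" "M \<subseteq> ev ` lists C"
  shows "is_presentation C U f ev M"
  unfolding is_presentation_def
proof (intro conjI rels inj)
  show "ev ` lists C = M"
  proof
    show "ev ` lists C \<subseteq> M"
      using normalize sound range(1) by blast
  qed (rule range(2))
  have "gen_cong C U u v" if uv: "u \<in> lists C" "v \<in> lists C" "ev u = ev v" for u v
  proof -
    obtain u' v' where u': "u' \<in> N" "gen_cong C U u u'" and v': "v' \<in> N" "gen_cong C U v v'"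
      using normalize[OF uv(1)] normalize[OF uv(2)] by blast
    have "ev u' = ev v'"
      using sound[OF u'(2)] sound[OF v'(2)] uv(3) by simp
    with inj_normal u' v' have "u' = v'"
      by (auto dest: inj_onD)
    with u' v' show ?thesis
      by (auto intro: gen_cong.trans gen_cong.sym)
  qed
  then show "{(u, v). u \<in> lists C \<and> v \<in> lists C \<and> ev u = ev v} = {(u, v). gen_cong C U u v}"
    using gen_cong_in_lists[OF rels] sound by blast
qed

section \<open>Evaluation of words\<close>

lemma map_comp_Some_left [simp]: "Some \<circ>\<^sub>m a = a"
  by (rule ext) (auto simp: map_comp_def split: option.split)

lemma map_comp_Some_right [simp]: "a \<circ>\<^sub>m Some = a"
  by (rule ext) (auto simp: map_comp_def)

lemma map_comp_assoc: "a \<circ>\<^sub>m (b \<circ>\<^sub>m c) = (a \<circ>\<^sub>m b) \<circ>\<^sub>m c"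
  by (rule ext) (auto simp: map_comp_def split: option.split)

text \<open>Unlike \<open>word_eval\<close>, which starts from the identity on \<open>{1..n}\<close>, this starts from
  the identity on \<open>nat\<close> and is therefore multiplicative for concatenation.\<close>

definition word_map :: "nat \<Rightarrow> letter list \<Rightarrow> (nat \<rightharpoonup> nat)" where
  "word_map n w = foldl (\<lambda>a c. pcomp a (letter_map n c)) Some w"

lemma foldl_letter_map: "foldl (\<lambda>a c. pcomp a (letter_map n c)) a w = word_map n w \<circ>\<^sub>m a"
proof (induction w arbitrary: a)
  case Nil
  then show ?case by (simp add: word_map_def)
next
  case (Cons c w)
  have "word_map n (c # w) = word_map n w \<circ>\<^sub>m letter_map n c"
    using Cons.IH[of "pcomp Some (letter_map n c)"] by (simp add: word_map_def pcomp_def)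
  then show ?case
    using Cons.IH by (simp add: pcomp_def map_comp_assoc)
qed

lemma word_map_Nil [simp]: "word_map n [] = Some"
  by (simp add: word_map_def)

lemma word_map_Cons [simp]: "word_map n (c # w) = word_map n w \<circ>\<^sub>m letter_map n c"
  using foldl_letter_map[of n "pcomp Some (letter_map n c)" w] by (simp add: word_map_def pcomp_def)

lemma word_map_append: "word_map n (u @ v) = word_map n v \<circ>\<^sub>m word_map n u"
  using foldl_letter_map[of n "word_map n u" v] by (simp add: word_map_def)

lemma word_eval_eq_word_map: "word_eval n w = word_map n w \<circ>\<^sub>m pid n"
  using foldl_letter_map[of n "pid n" w] by (simp add: word_eval_def)

lemma word_eval_snoc: "word_eval n (w @ [c]) = letter_map n c \<circ>\<^sub>m word_eval n w"
  by (simp add: word_eval_def pcomp_def)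

lemma word_map_map_E:
  "l \<noteq> [] \<Longrightarrow> word_map n (map E l) = (\<lambda>i. if i \<in> {1..n} - set l then Some i else None)"
proof (induction l)
  case (Cons a l)
  then show ?case
    by (cases "l = []") (auto simp: te_def map_comp_def fun_eq_iff)
qed simp

lemma letter_map_relations:
  "te n i \<circ>\<^sub>m te n i = te n i"
  "ty n \<circ>\<^sub>m tx n = te n n"
  "tx n \<circ>\<^sub>m ty n = te n 1"
  "te n 1 \<circ>\<^sub>m tx n = tx n"
  "ty n \<circ>\<^sub>m te n 1 = ty n"
  "te n j \<circ>\<^sub>m te n i = te n i \<circ>\<^sub>m te n j"
  "1 \<le> i \<Longrightarrow> te n (Suc i) \<circ>\<^sub>m tx n = tx n \<circ>\<^sub>m te n i"
  by (auto simp: fun_eq_iff map_comp_def te_def tx_def ty_def)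

lemma relsU_cases:
  assumes "(u, v) \<in> relsU n"
  obtains (U1) i where "u = [E i, E i]" "v = [E i]"
    | (U2a) "u = [X, Y]" "v = [E n]" | (U2b) "u = [Y, X]" "v = [E 1]"
    | (U3a) "u = [X, E 1]" "v = [X]" | (U3b) "u = [E 1, Y]" "v = [Y]"
    | (U4) i j where "u = [E i, E j]" "v = [E j, E i]"
    | (U5) i where "u = [X, E (Suc i)]" "v = [E i, X]" "1 \<le> i"
    | (U6) "u = X # map E [2..<Suc n]" "v = map E [1..<Suc n]"
  using assms unfolding relsU_def
  by (elim UnE insertE CollectE exE conjE emptyE Pair_inject) auto

lemma word_map_relsU:
  assumes "0 < n" "(u, v) \<in> relsU n"
  shows "word_map n u = word_map n v"
proof -
  have U6: "word_map n (map E [2..<Suc n]) \<circ>\<^sub>m tx n = word_map n (map E [1..<Suc n])"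
  proof (cases "n = 1")
    case True
    then show ?thesis
      by (simp add: fun_eq_iff tx_def te_def)
  next
    case False
    with assms(1) have "[2..<Suc n] \<noteq> []" "[1..<Suc n] \<noteq> []"
      by simp_all
    then show ?thesis
      unfolding word_map_map_E[OF \<open>[2..<Suc n] \<noteq> []\<close>]
        word_map_map_E[OF \<open>[1..<Suc n] \<noteq> []\<close>]
      by (auto simp: fun_eq_iff map_comp_def tx_def atLeastLessThanSuc_atLeastAtMost)
  qed
  from assms(2) show ?thesis
    by (cases rule: relsU_cases) (simp_all add: letter_map_relations[unfolded One_nat_def] U6 del: upt_Suc)
qed

lemma word_eval_gen_cong:
  assumes "0 < n" "gen_cong A (relsU n) u v"
  shows "word_eval n u = word_eval n v"
proof -
  from assms(2) have "word_map n u = word_map n v"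
    by (induction rule: gen_cong.induct) (auto simp: word_map_relsU[OF assms(1)] word_map_append)
  then show ?thesis
    by (simp add: word_eval_eq_word_map)
qed

text \<open>\<open>x\<close> and \<open>y\<close> are recognised by \<open>1 \<mapsto> 2\<close> and \<open>2 \<mapsto> 1\<close>, and \<open>e\<^sub>i\<close> by being undefined at \<open>i\<close>.\<close>

lemma inj_on_letter_map: "2 \<le> n \<Longrightarrow> inj_on (letter_map n) (alphabet n)"
proof (rule inj_onI)
  fix c d
  assume "2 \<le> n" "c \<in> alphabet n" "d \<in> alphabet n" and eq: "letter_map n c = letter_map n d"
  show "c = d"
  proof (cases "\<exists>i j. c = E i \<and> d = E j")
    case True
    then obtain i j where "c = E i" "d = E j"
      by blast
    with \<open>c \<in> alphabet n\<close> eq[THEN fun_cong, of i] show ?thesis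
      by (auto simp: alphabet_def te_def split: if_splits)
  next
    case False
    with \<open>2 \<le> n\<close> \<open>c \<in> alphabet n\<close> \<open>d \<in> alphabet n\<close> eq[THEN fun_cong, of 1] eq[THEN fun_cong, of 2]
    show ?thesis
      unfolding alphabet_def by (cases c; cases d) (auto simp: tx_def ty_def te_def split: if_splits)
  qed
qed

section \<open>Order-preserving restrictions of rotations\<close>

lemma gpow_eq_add: "1 \<le> i \<Longrightarrow> i + k \<le> n \<Longrightarrow> gpow n k i = i + k"
  by (simp add: gpow_def)

lemma gpow_eq_add_sub: "i \<le> n \<Longrightarrow> k < n \<Longrightarrow> n < i + k \<Longrightarrow> gpow n k i = i + k - n"
proof -
  assume "i \<le> n" "k < n" "n < i + k"
  then have "(i - 1 + k) mod n = i + k - n - 1"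
    using le_mod_geq[of n "i - 1 + k"] by simp
  with \<open>n < i + k\<close> show ?thesis
    by (simp add: gpow_def)
qed

lemma gpow_in_range: "0 < n \<Longrightarrow> gpow n k i \<in> {1..n}"
  by (simp add: gpow_def Suc_leI)

lemma restrict_gpow_in_OCI:
  assumes "k < n" "D \<subseteq> {1..n}"
    and mono: "\<And>i j. i \<in> D \<Longrightarrow> j \<in> D \<Longrightarrow> i < j \<Longrightarrow> gpow n k i < gpow n k j"
  shows "(\<lambda>i. if i \<in> D then Some (gpow n k i) else None) \<in> OCI n" (is "?a \<in> _")
proof -
  have dom: "dom ?a = D"
    by (auto simp: dom_def)
  have "inj_on ?a D"
    by (rule inj_onI) (metis linorder_neqE_nat mono less_irrefl option.inject)
  moreover have "ran ?a \<subseteq> {1..n}"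
    using gpow_in_range[of n k] assms(1) by (auto simp: ran_def)
  ultimately have "?a \<in> SymInv n"
    using assms(2) by (simp add: SymInv_def dom)
  moreover have "gpow n k \<in> CycGrp n"
    using assms(1) by (auto simp: CycGrp_def)
  moreover have "?a = (\<lambda>i. if i \<in> dom ?a then Some (gpow n k i) else None)"
    by (simp add: dom)
  ultimately have "?a \<in> CI n"
    unfolding CI_def by blast
  moreover have "\<forall>i \<in> D. \<forall>j \<in> D. i \<le> j \<longrightarrow> gpow n k i \<le> gpow n k j"
    using mono by (auto simp: order.order_iff_strict)
  ultimately show ?thesis
    by (simp add: OCI_def dom)
qed

lemma gpow_monotone_no_wrap:
  assumes "k < n" "D \<subseteq> {1..n}"
    and mono: "\<forall>i \<in> D. \<forall>j \<in> D. i \<le> j \<longrightarrow> gpow n k i \<le> gpow n k j"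
  shows "(\<forall>i \<in> D. i + k \<le> n) \<or> (\<forall>i \<in> D. n < i + k)"
proof (rule ccontr)
  assume "\<not> ?thesis"
  then obtain i j where "i \<in> D" "n < i + k" "j \<in> D" "j + k \<le> n"
    by (auto simp: not_le not_less)
  moreover from this have "j \<le> i"
    by linarith
  moreover have "gpow n k j = j + k"
    using \<open>j \<in> D\<close> \<open>j + k \<le> n\<close> assms(2) by (intro gpow_eq_add) auto
  moreover have "gpow n k i = i + k - n"
    using \<open>i \<in> D\<close> \<open>n < i + k\<close> assms(1,2) by (intro gpow_eq_add_sub) auto
  ultimately have "j + k \<le> i + k - n"
    using mono by metis
  moreover have "i \<le> n" "1 \<le> j"
    using \<open>i \<in> D\<close> \<open>j \<in> D\<close> assms(2) by auto
  ultimately show False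
    by arith
qed

section \<open>Counting generators and relations\<close>

lemma card_alphabet: "card (alphabet n) = n + 2"
proof -
  have "card ({X, Y} \<union> E ` {1..n}) = card {X, Y} + card (E ` {1..n})"
    by (rule card_Un_disjoint) auto
  moreover have "card (E ` {1..n}) = n"
    by (simp add: card_image inj_on_def)
  ultimately show ?thesis
    by (simp add: alphabet_def)
qed

lemma card_pairs_less: "2 * card {(i, j). 1 \<le> i \<and> i < j \<and> j \<le> (n::nat)} = n * (n - 1)"
proof (induction n)
  case (Suc n)
  have split: "{(i, j). 1 \<le> i \<and> i < j \<and> j \<le> Suc n}
      = {(i, j). 1 \<le> i \<and> i < j \<and> j \<le> n} \<union> (\<lambda>i. (i, Suc n)) ` {1..n}"
    by auto
  have "finite {(i, j). 1 \<le> i \<and> i < j \<and> j \<le> n}"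
    by (rule finite_subset[of _ "{1..n} \<times> {1..n}"]) auto
  then have "card {(i, j). 1 \<le> i \<and> i < j \<and> j \<le> Suc n}
      = card {(i, j). 1 \<le> i \<and> i < j \<and> j \<le> n} + n"
    unfolding split by (subst card_Un_disjoint) (auto simp: card_image inj_on_def)
  with Suc.IH show ?case
    by (cases n) (auto simp: algebra_simps)
qed (simp add: card_eq_0_iff)

lemma card_relsU:
  assumes "2 \<le> n"
  shows "2 * card (relsU n) = n^2 + 3*n + 8"
proof -
  define U1 where "U1 = {([E i, E i], [E i]) | i. 1 \<le> i \<and> i \<le> n}"
  define U2 where "U2 = {([X, Y], [E n]), ([Y, X], [E 1])}"
  define U3 where "U3 = {([X, E 1], [X]), ([E 1, Y], [Y])}"
  define U4 where "U4 = {([E i, E j], [E j, E i]) | i j. 1 \<le> i \<and> i < j \<and> j \<le> n}"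
  define U5 where "U5 = {([X, E (i + 1)], [E i, X]) | i. 1 \<le> i \<and> i \<le> n - 1}"
  define U6 where "U6 = {(X # map E [2..<n+1], map E [1..<n+1])}"
  have relsU: "relsU n = U1 \<union> U2 \<union> U3 \<union> U4 \<union> U5 \<union> U6"
    unfolding relsU_def U1_def U2_def U3_def U4_def U5_def U6_def by simp
  have U1: "U1 = (\<lambda>i. ([E i, E i], [E i])) ` {1..n}"
    unfolding U1_def by auto
  have U4: "U4 = (\<lambda>(i, j). ([E i, E j], [E j, E i])) ` {(i, j). 1 \<le> i \<and> i < j \<and> j \<le> n}"
    unfolding U4_def by auto
  have U5: "U5 = (\<lambda>i. ([X, E (i + 1)], [E i, X])) ` {1..n-1}"
    unfolding U5_def by auto
  have finite: "finite {(i, j). 1 \<le> i \<and> i < j \<and> j \<le> n}"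
    by (rule finite_subset[of _ "{1..n} \<times> {1..n}"]) auto
  have "card U1 = n" "card U2 = 2" "card U3 = 2" "card U5 = n - 1" "card U6 = 1"
    using assms by (simp_all add: U1 U2_def U3_def U5 U6_def card_image inj_on_def)
  moreover have "card U4 = card {(i, j). 1 \<le> i \<and> i < j \<and> j \<le> n}"
    unfolding U4 by (rule card_image) (auto simp: inj_on_def)
  moreover have "map E l \<noteq> [X]" "map E l \<noteq> [Y]" "map E l \<noteq> [E i, X]" for l i
    by (auto simp: map_eq_Cons_conv)
  then have "U1 \<inter> U2 = {}" "(U1 \<union> U2) \<inter> U3 = {}" "(U1 \<union> U2 \<union> U3) \<inter> U4 = {}"
      "(U1 \<union> U2 \<union> U3 \<union> U4) \<inter> U5 = {}" "(U1 \<union> U2 \<union> U3 \<union> U4 \<union> U5) \<inter> U6 = {}"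
    unfolding U1_def U2_def U3_def U4_def U5_def U6_def by auto
  moreover have "finite U1" "finite U2" "finite U3" "finite U4" "finite U5" "finite U6"
    using finite by (simp_all add: U1 U2_def U3_def U4 U5 U6_def)
  ultimately have "card (relsU n) = n + 4 + card {(i, j). 1 \<le> i \<and> i < j \<and> j \<le> n} + (n - 1) + 1"
    unfolding relsU by (simp add: card_Un_disjoint)
  then show ?thesis
    using card_pairs_less[of n] assms by (simp add: power2_eq_square algebra_simps)
qed

section \<open>Normal forms\<close>

locale oci_presentation =
  fixes n :: nat
  assumes two_le_n: "2 \<le> n"
begin

declare upt_Suc [simp del] \<comment> \<open>otherwise the simplifier keeps unfolding \<open>[1..<Suc n]\<close>\<close>

abbreviation cong_U :: "letter list \<Rightarrow> letter list \<Rightarrow> bool" (infix \<open>\<approx>\<close> 50) where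
  "u \<approx> v \<equiv> gen_cong (alphabet n) (relsU n) u v"

lemma letters_in_alphabet [simp]:
  "X \<in> alphabet n" "Y \<in> alphabet n" "E i \<in> alphabet n \<longleftrightarrow> 1 \<le> i \<and> i \<le> n"
  by (auto simp: alphabet_def)

lemma replicate_in_lists [simp]:
  "replicate k X \<in> lists (alphabet n)" "replicate k Y \<in> lists (alphabet n)"
  by auto

lemma map_E_in_lists [simp]: "map E l \<in> lists (alphabet n) \<longleftrightarrow> set l \<subseteq> {1..n}"
  by (auto simp: subset_iff)

lemma relsU_in_lists: "relsU n \<subseteq> lists (alphabet n) \<times> lists (alphabet n)"
  using two_le_n by (auto simp: relsU_def)

lemma cong_refl: "w \<in> lists (alphabet n) \<Longrightarrow> w \<approx> w"
  by (rule gen_cong.refl)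

lemma cong_sym: "u \<approx> v \<Longrightarrow> v \<approx> u"
  by (rule gen_cong.sym)

lemma cong_trans [trans]: "u \<approx> v \<Longrightarrow> v \<approx> w \<Longrightarrow> u \<approx> w"
  by (rule gen_cong.trans)

lemma cong_append: "u \<approx> v \<Longrightarrow> u' \<approx> v' \<Longrightarrow> u @ u' \<approx> v @ v'"
  by (rule gen_cong_append[OF relsU_in_lists])

lemma cong_append_left: "p \<in> lists (alphabet n) \<Longrightarrow> u \<approx> v \<Longrightarrow> p @ u \<approx> p @ v"
  by (rule cong_append[OF cong_refl])

lemma cong_append_right: "q \<in> lists (alphabet n) \<Longrightarrow> u \<approx> v \<Longrightarrow> u @ q \<approx> v @ q"
  by (rule cong_append[OF _ cong_refl])

lemma cong_idem: "1 \<le> i \<Longrightarrow> i \<le> n \<Longrightarrow> [E i, E i] \<approx> [E i]"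
  by (rule gen_cong.base) (auto simp: relsU_def)

lemma cong_XY: "[X, Y] \<approx> [E n]"
  by (rule gen_cong.base) (auto simp: relsU_def)

lemma cong_YX: "[Y, X] \<approx> [E 1]"
  by (rule gen_cong.base) (auto simp: relsU_def)

lemma cong_XE1: "[X, E 1] \<approx> [X]"
  by (rule gen_cong.base) (auto simp: relsU_def)

lemma cong_E1Y: "[E 1, Y] \<approx> [Y]"
  by (rule gen_cong.base) (auto simp: relsU_def)

lemma cong_E_comm:
  assumes "1 \<le> i" "i \<le> n" "1 \<le> j" "j \<le> n"
  shows "[E i, E j] \<approx> [E j, E i]"
proof (cases i j rule: linorder_cases)
  case less
  with assms show ?thesis
    by (intro gen_cong.base) (auto simp: relsU_def)
next
  case equal
  with assms show ?thesis
    using cong_refl[of "[E i, E i]"] by simp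
next
  case greater
  with assms show ?thesis
    by (intro cong_sym[OF gen_cong.base]) (auto simp: relsU_def)
qed

lemma cong_XE_Suc: "1 \<le> i \<Longrightarrow> i < n \<Longrightarrow> [X, E (Suc i)] \<approx> [E i, X]"
  by (rule gen_cong.base) (auto simp: relsU_def)

lemma cong_X_E_tail: "X # map E [2..<Suc n] \<approx> map E [1..<Suc n]"
  by (rule gen_cong.base) (auto simp: relsU_def)

lemma cong_YEn: "[Y, E n] \<approx> [Y]"
proof -
  have "[Y, E n] \<approx> [Y] @ [X, Y]"
    using cong_append_left[OF _ cong_sym[OF cong_XY], of "[Y]"] by simp
  also have "\<dots> = [Y, X] @ [Y]" by simp
  also have "\<dots> \<approx> [E 1] @ [Y]"
    by (rule cong_append_right[OF _ cong_YX]) simp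
  also have "\<dots> \<approx> [Y]"
    using cong_E1Y by simp
  finally show ?thesis .
qed

lemma cong_EnX: "[E n, X] \<approx> [X]"
proof -
  have "[E n, X] \<approx> [X, Y] @ [X]"
    using cong_append_right[OF _ cong_sym[OF cong_XY], of "[X]"] by simp
  also have "\<dots> = [X] @ [Y, X]" by simp
  also have "\<dots> \<approx> [X] @ [E 1]"
    by (rule cong_append_left[OF _ cong_YX]) simp
  also have "\<dots> \<approx> [X]"
    using cong_XE1 by simp
  finally show ?thesis .
qed

lemma cong_E_Suc_Y:
  assumes "1 \<le> i" "i < n"
  shows "[E (Suc i), Y] \<approx> [Y, E i]"
proof -
  have "[E (Suc i), Y] \<approx> [E (Suc i)] @ [E 1, Y]"
    using cong_append_left[OF _ cong_sym[OF cong_E1Y], of "[E (Suc i)]"] assms by simp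
  also have "\<dots> = [E (Suc i), E 1] @ [Y]" by simp
  also have "\<dots> \<approx> [E 1, E (Suc i)] @ [Y]"
    by (rule cong_append_right[OF _ cong_E_comm]) (use assms in auto)
  also have "\<dots> = [E 1] @ [E (Suc i), Y]" by simp
  also have "\<dots> \<approx> [Y, X] @ [E (Suc i), Y]"
    by (rule cong_append_right[OF _ cong_sym[OF cong_YX]]) (use assms in auto)
  also have "\<dots> = [Y] @ [X, E (Suc i)] @ [Y]" by simp
  also have "\<dots> \<approx> [Y] @ [E i, X] @ [Y]"
    by (rule cong_append_left[OF _ cong_append_right[OF _ cong_XE_Suc]]) (use assms in auto)
  also have "\<dots> = [Y, E i] @ [X, Y]" by simp
  also have "\<dots> \<approx> [Y] @ [E i, E n]"
    using cong_append_left[OF _ cong_XY, of "[Y, E i]"] assms by simp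
  also have "\<dots> \<approx> [Y] @ [E n, E i]"
    by (rule cong_append_left[OF _ cong_E_comm]) (use assms in auto)
  also have "\<dots> = [Y, E n] @ [E i]" by simp
  also have "\<dots> \<approx> [Y, E i]"
    using cong_append_right[OF _ cong_YEn, of "[E i]"] assms by simp
  finally show ?thesis .
qed

lemma cong_map_E_sorted: "set l \<subseteq> {1..n} \<Longrightarrow> map E l \<approx> map E (sorted_list_of_set (set l))"
  by (rule gen_cong_map_sorted_list_of_set[OF relsU_in_lists, of E "{1..n}"])
    (auto intro: cong_idem cong_E_comm)

lemma cong_map_E_perm: "set l \<subseteq> {1..n} \<Longrightarrow> set l' = set l \<Longrightarrow> map E l \<approx> map E l'"
  using cong_map_E_sorted[of l] cong_map_E_sorted[of l'] by (auto intro: cong_trans cong_sym)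

text \<open>\<open>x\<^sup>k e\<^sub>i = x\<^sup>k\<close> for \<open>i \<le> k\<close>: by (U5) \<open>e\<^sub>i\<close> moves left through \<open>x\<close> as \<open>e\<^bsub>i-1\<^esub>\<close> until (U3)
  absorbs \<open>e\<^sub>1\<close>. Symmetrically \<open>y\<^sup>k e\<^sub>i = y\<^sup>k\<close> for \<open>i > n - k\<close>, with \<open>y e\<^sub>n = y\<close>.\<close>

lemma cong_X_pow_E: "1 \<le> i \<Longrightarrow> i \<le> k \<Longrightarrow> i \<le> n \<Longrightarrow> replicate k X @ [E i] \<approx> replicate k X"
proof (induction i arbitrary: k)
  case (Suc i)
  then obtain m where k: "k = Suc m"
    by (cases k) auto
  show ?case
  proof (cases "i = 0")
    case True
    have "replicate k X @ [E (Suc i)] = replicate m X @ [X, E 1]"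
      by (simp add: True k replicate_app_Cons_same)
    also have "\<dots> \<approx> replicate m X @ [X]"
      by (rule cong_append_left[OF _ cong_XE1]) simp
    also have "\<dots> = replicate k X"
      by (simp add: k replicate_app_Cons_same)
    finally show ?thesis .
  next
    case False
    have "replicate k X @ [E (Suc i)] = replicate m X @ [X, E (Suc i)]"
      by (simp add: k replicate_app_Cons_same)
    also have "\<dots> \<approx> replicate m X @ [E i, X]"
      by (rule cong_append_left[OF _ cong_XE_Suc]) (use False Suc.prems in auto)
    also have "\<dots> = (replicate m X @ [E i]) @ [X]"
      by simp
    also have "\<dots> \<approx> replicate m X @ [X]"
      by (rule cong_append_right[OF _ Suc.IH]) (use False Suc.prems k in auto)
    also have "\<dots> = replicate k X"
      by (simp add: k replicate_app_Cons_same)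
    finally show ?thesis .
  qed
qed simp

lemma cong_X_pow_map_E: "set s \<subseteq> {1..k} \<Longrightarrow> k \<le> n \<Longrightarrow> replicate k X @ map E s \<approx> replicate k X"
proof (induction s rule: rev_induct)
  case Nil
  then show ?case by (simp add: cong_refl)
next
  case (snoc a s)
  have "replicate k X @ map E (s @ [a]) = (replicate k X @ map E s) @ [E a]"
    by simp
  also have "\<dots> \<approx> replicate k X @ [E a]"
    by (rule cong_append_right) (use snoc in auto)
  also have "\<dots> \<approx> replicate k X"
    by (rule cong_X_pow_E) (use snoc in auto)
  finally show ?case .
qed

lemma cong_Y_pow_E:
  "1 \<le> i \<Longrightarrow> i \<le> n \<Longrightarrow> 1 \<le> k \<Longrightarrow> n < i + k \<Longrightarrow> replicate k Y @ [E i] \<approx> replicate k Y"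
proof (induction "n - i" arbitrary: i k)
  case 0
  then have "i = n" by simp
  obtain m where k: "k = Suc m"
    using 0 by (cases k) auto
  have "replicate k Y @ [E i] = replicate m Y @ [Y, E n]"
    by (simp add: \<open>i = n\<close> k replicate_app_Cons_same)
  also have "\<dots> \<approx> replicate m Y @ [Y]"
    by (rule cong_append_left[OF _ cong_YEn]) simp
  also have "\<dots> = replicate k Y"
    by (simp add: k replicate_app_Cons_same)
  finally show ?case .
next
  case (Suc d)
  obtain m where k: "k = Suc m"
    using Suc by (cases k) auto
  have "1 \<le> m" "1 \<le> i" "i < n"
    using Suc k by auto
  have "replicate k Y @ [E i] = replicate m Y @ [Y, E i]"
    by (simp add: k replicate_app_Cons_same)
  also have "\<dots> \<approx> replicate m Y @ [E (Suc i), Y]"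
    by (rule cong_append_left[OF _ cong_sym[OF cong_E_Suc_Y]]) (use \<open>1 \<le> i\<close> \<open>i < n\<close> in auto)
  also have "\<dots> = (replicate m Y @ [E (Suc i)]) @ [Y]"
    by simp
  also have "\<dots> \<approx> replicate m Y @ [Y]"
    by (rule cong_append_right[OF _ Suc.hyps(1)]) (use Suc k \<open>1 \<le> m\<close> \<open>i < n\<close> in auto)
  also have "\<dots> = replicate k Y"
    by (simp add: k replicate_app_Cons_same)
  finally show ?case .
qed

lemma cong_Y_pow_map_E:
  "set s \<subseteq> {Suc n - k..n} \<Longrightarrow> 1 \<le> k \<Longrightarrow> k \<le> n \<Longrightarrow> replicate k Y @ map E s \<approx> replicate k Y"
proof (induction s rule: rev_induct)
  case Nil
  then show ?case by (simp add: cong_refl)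
next
  case (snoc a s)
  have "replicate k Y @ map E (s @ [a]) = (replicate k Y @ map E s) @ [E a]"
    by simp
  also have "\<dots> \<approx> replicate k Y @ [E a]"
    by (rule cong_append_right) (use snoc in auto)
  also have "\<dots> \<approx> replicate k Y"
    by (rule cong_Y_pow_E) (use snoc in auto)
  finally show ?case .
qed

lemma cong_map_E_X:
  "set s \<subseteq> {1..n} \<Longrightarrow> map E s @ [X] \<approx> X # map E (map Suc (filter (\<lambda>i. i < n) s))"
proof (induction s)
  case Nil
  then show ?case by (simp add: cong_refl)
next
  case (Cons a s)
  let ?s' = "map E (map Suc (filter (\<lambda>i. i < n) s))"
  have "?s' \<in> lists (alphabet n)"
    using set_map_Suc_filter_less[of s n] Cons.prems by (simp only: map_E_in_lists) simp
  have "map E (a # s) @ [X] = [E a] @ (map E s @ [X])"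
    by simp
  also have "\<dots> \<approx> [E a] @ X # ?s'"
    by (rule cong_append_left) (use Cons in auto)
  also have "\<dots> = [E a, X] @ ?s'"
    by simp
  also have "\<dots> \<approx> X # map E (map Suc (filter (\<lambda>i. i < n) (a # s)))"
  proof (cases "a < n")
    case True
    then show ?thesis
      using cong_append_right[OF \<open>?s' \<in> _\<close> cong_sym[OF cong_XE_Suc]] Cons.prems by auto
  next
    case False
    then show ?thesis
      using cong_append_right[OF \<open>?s' \<in> _\<close> cong_EnX] Cons.prems by auto
  qed
  finally show ?case .
qed

lemma cong_map_E_Y:
  "set s \<subseteq> {1..n} \<Longrightarrow> map E s @ [Y] \<approx> Y # map E (map (\<lambda>i. i - 1) (filter (\<lambda>i. 1 < i) s))"
proof (induction s)
  case Nil
  then show ?case by (simp add: cong_refl)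
next
  case (Cons a s)
  let ?s' = "map E (map (\<lambda>i. i - 1) (filter (\<lambda>i. 1 < i) s))"
  have "?s' \<in> lists (alphabet n)"
    using set_map_pred_filter_greater[of s n] Cons.prems by (simp only: map_E_in_lists) simp
  have "map E (a # s) @ [Y] = [E a] @ (map E s @ [Y])"
    by simp
  also have "\<dots> \<approx> [E a] @ Y # ?s'"
    by (rule cong_append_left) (use Cons in auto)
  also have "\<dots> = [E a, Y] @ ?s'"
    by simp
  also have "\<dots> \<approx> Y # map E (map (\<lambda>i. i - 1) (filter (\<lambda>i. 1 < i) (a # s)))"
  proof (cases "1 < a")
    case True
    then have "[E (Suc (a - 1)), Y] \<approx> [Y, E (a - 1)]"
      using Cons.prems by (intro cong_E_Suc_Y) auto
    then have "[E a, Y] @ ?s' \<approx> [Y, E (a - 1)] @ ?s'"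
      using True by (intro cong_append_right[OF \<open>?s' \<in> _\<close>]) simp
    with True show ?thesis
      by simp
  next
    case False
    then show ?thesis
      using cong_append_right[OF \<open>?s' \<in> _\<close> cong_E1Y] Cons.prems by auto
  qed
  finally show ?case .
qed

definition zero_word :: "letter list" where
  "zero_word = map E [1..<Suc n]"

lemma zero_word_in_lists [simp]: "zero_word \<in> lists (alphabet n)"
  by (simp add: zero_word_def atLeastLessThanSuc_atLeastAtMost)

lemma cong_map_E_zero_word: "set l = {1..n} \<Longrightarrow> map E l \<approx> zero_word"
  unfolding zero_word_def
  by (rule cong_map_E_perm) (simp_all add: atLeastLessThanSuc_atLeastAtMost)

lemma zero_word_Cons: "zero_word = E 1 # map E [2..<Suc n]"
  using two_le_n upt_conv_Cons[of 1 "Suc n"] by (simp add: zero_word_def numeral_2_eq_2)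

lemma cong_X_zero_word: "X # zero_word \<approx> zero_word"
proof -
  have "X # zero_word = [X, E 1] @ map E [2..<Suc n]"
    by (simp add: zero_word_Cons)
  also have "\<dots> \<approx> [X] @ map E [2..<Suc n]"
    by (rule cong_append_right[OF _ cong_XE1]) auto
  also have "\<dots> \<approx> zero_word"
    using cong_X_E_tail by (simp add: zero_word_def)
  finally show ?thesis .
qed

lemma cong_Y_zero_word: "Y # zero_word \<approx> zero_word"
proof -
  have "Y # zero_word \<approx> [Y] @ X # map E [2..<Suc n]"
    using cong_append_left[OF _ cong_sym[OF cong_X_E_tail], of "[Y]"] by (simp add: zero_word_def)
  also have "\<dots> = [Y, X] @ map E [2..<Suc n]"
    by simp
  also have "\<dots> \<approx> [E 1] @ map E [2..<Suc n]"
    by (rule cong_append_right[OF _ cong_YX]) auto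
  also have "\<dots> = zero_word"
    by (simp add: zero_word_Cons)
  finally show ?thesis .
qed

lemma cong_replicate_zero_word: "c \<in> {X, Y} \<Longrightarrow> replicate k c @ zero_word \<approx> zero_word"
proof (induction k)
  case 0
  then show ?case by (simp add: cong_refl)
next
  case (Suc k)
  have "replicate (Suc k) c @ zero_word = [c] @ (replicate k c @ zero_word)"
    by simp
  also have "\<dots> \<approx> [c] @ zero_word"
    by (rule cong_append_left[OF _ Suc.IH]) (use Suc.prems in auto)
  also have "\<dots> \<approx> zero_word"
    using Suc.prems cong_X_zero_word cong_Y_zero_word by auto
  finally show ?case .
qed

lemma cong_X_pow_upper_zero_word:
  assumes "1 \<le> k" "k \<le> n"
  shows "replicate k X @ map E [Suc k..<Suc n] \<approx> zero_word"
proof -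
  obtain m where k: "k = Suc m"
    using assms by (cases k) auto
  have "replicate k X @ map E [Suc k..<Suc n]
      \<approx> (replicate k X @ map E [2..<Suc k]) @ map E [Suc k..<Suc n]"
    by (rule cong_append_right[OF _ cong_sym[OF cong_X_pow_map_E]]) (use assms in auto)
  also have "\<dots> = replicate m X @ X # map E [2..<Suc n]"
    using assms upt_add_eq_append[of "Suc (Suc 0)" "Suc k" "n - k"]
    by (simp add: k replicate_app_Cons_same numeral_2_eq_2)
  also have "\<dots> \<approx> replicate m X @ zero_word"
    by (rule cong_append_left[OF _ cong_X_E_tail[folded zero_word_def]]) simp
  also have "\<dots> \<approx> zero_word"
    by (rule cong_replicate_zero_word) simp
  finally show ?thesis .
qed

lemma cong_Y_pow_lower_zero_word:
  assumes "1 \<le> k" "k \<le> n"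
  shows "replicate k Y @ map E [1..<Suc (n - k)] \<approx> zero_word"
proof -
  have "replicate k Y @ map E [1..<Suc (n - k)]
      \<approx> (replicate k Y @ map E [Suc (n - k)..<Suc n]) @ map E [1..<Suc (n - k)]"
    by (rule cong_append_right[OF _ cong_sym[OF cong_Y_pow_map_E]]) (use assms in auto)
  also have "\<dots> = replicate k Y @ map E ([Suc (n - k)..<Suc n] @ [1..<Suc (n - k)])"
    by simp
  also have "\<dots> \<approx> replicate k Y @ zero_word"
    by (rule cong_append_left[OF _ cong_map_E_zero_word]) (use assms in auto)
  also have "\<dots> \<approx> zero_word"
    by (rule cong_replicate_zero_word) simp
  finally show ?thesis .
qed

text \<open>The excluded sets \<open>S\<close> are those for which the word equals
  the zero, which is kept only as \<open>k = 0\<close>, \<open>S = {1..n}\<close>.\<close>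

definition normal_forms :: "letter list set" where
  "normal_forms =
     {replicate k X @ map E (sorted_list_of_set S) | k S.
        k < n \<and> S \<subseteq> {Suc k..n} \<and> (0 < k \<longrightarrow> S \<noteq> {Suc k..n})}
   \<union> {replicate k Y @ map E (sorted_list_of_set S) | k S.
        0 < k \<and> k < n \<and> S \<subseteq> {1..n - k} \<and> S \<noteq> {1..n - k}}"

lemma zero_word_in_normal_forms: "zero_word \<in> normal_forms"
proof -
  have "zero_word = replicate 0 X @ map E (sorted_list_of_set {Suc 0..n})"
    by (simp add: zero_word_def sorted_list_of_set_atLeastAtMost)
  moreover have "0 < n"
    using two_le_n by simp
  ultimately show ?thesis
    unfolding normal_forms_def by (intro UnI1 CollectI exI[of _ 0] exI[of _ "{Suc 0..n}"]) simp
qed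

lemma normal_formsE:
  assumes "w \<in> normal_forms"
  obtains (X_pow) k s where "w = replicate k X @ map E s" "k < n" "set s \<subseteq> {1..n}"
  | (Y_pow) k s where "w = replicate k Y @ map E s" "0 < k" "k < n" "set s \<subseteq> {1..n}"
  using assms unfolding normal_forms_def
proof (elim UnE CollectE exE conjE)
  fix k S
  assume "w = replicate k X @ map E (sorted_list_of_set S)" "k < n" "S \<subseteq> {Suc k..n}"
  moreover from \<open>S \<subseteq> {Suc k..n}\<close> have "S \<subseteq> {1..n}"
    by (rule order.trans) auto
  moreover from \<open>S \<subseteq> {1..n}\<close> have "finite S"
    by (rule finite_subset) simp
  ultimately show thesis
    using X_pow by simp
next
  fix k S
  assume "w = replicate k Y @ map E (sorted_list_of_set S)" "0 < k" "k < n" "S \<subseteq> {1..n - k}"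
  moreover from \<open>S \<subseteq> {1..n - k}\<close> have "S \<subseteq> {1..n}"
    by (rule order.trans) auto
  moreover from \<open>S \<subseteq> {1..n}\<close> have "finite S"
    by (rule finite_subset) simp
  ultimately show thesis
    using Y_pow by simp
qed

lemma cong_X_pow_normal_form:
  assumes "k \<le> n" "set t \<subseteq> {1..n}"
  shows "\<exists>w \<in> normal_forms. replicate k X @ map E t \<approx> w"
proof -
  define S where "S = {i \<in> set t. k < i}"
  have S: "S \<subseteq> {Suc k..n}" "finite S"
    using assms by (auto simp: S_def)
  have "replicate k X @ map E t \<approx> replicate k X @ map E (filter (\<lambda>i. i \<le> k) t @ sorted_list_of_set S)"
    by (rule cong_append_left[OF _ cong_map_E_perm]) (use assms S in \<open>auto simp: S_def\<close>)
  also have "\<dots> = (replicate k X @ map E (filter (\<lambda>i. i \<le> k) t)) @ map E (sorted_list_of_set S)"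
    by simp
  also have "\<dots> \<approx> replicate k X @ map E (sorted_list_of_set S)"
    by (rule cong_append_right[OF _ cong_X_pow_map_E]) (use assms S in auto)
  finally have reduced: "replicate k X @ map E t \<approx> replicate k X @ map E (sorted_list_of_set S)" .
  show ?thesis
  proof (cases "0 < k \<and> S = {Suc k..n}")
    case True
    then have "replicate k X @ map E (sorted_list_of_set S) \<approx> zero_word"
      using cong_X_pow_upper_zero_word[of k] assms
      by (simp add: sorted_list_of_set_atLeastAtMost)
    then show ?thesis
      using reduced zero_word_in_normal_forms by (blast intro: cong_trans)
  next
    case False
    have "k < n"
      using False S assms two_le_n by (cases "k = n") auto
    with False S have "replicate k X @ map E (sorted_list_of_set S) \<in> normal_forms"
      unfolding normal_forms_def by blast
    then show ?thesis
      using reduced by blast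
  qed
qed

lemma cong_Y_pow_normal_form:
  assumes "k \<le> n" "set t \<subseteq> {1..n}"
  shows "\<exists>w \<in> normal_forms. replicate k Y @ map E t \<approx> w"
proof (cases "k = 0")
  case True
  then show ?thesis
    using cong_X_pow_normal_form[OF _ assms(2), of 0] by simp
next
  case False
  define S where "S = {i \<in> set t. i \<le> n - k}"
  have S: "S \<subseteq> {1..n - k}" "S \<subseteq> {1..n}" "finite S"
    using assms by (auto simp: S_def)
  have "replicate k Y @ map E t \<approx> replicate k Y @ map E (filter (\<lambda>i. n - k < i) t @ sorted_list_of_set S)"
    by (rule cong_append_left[OF _ cong_map_E_perm]) (use assms S in \<open>auto simp: S_def\<close>)
  also have "\<dots> = (replicate k Y @ map E (filter (\<lambda>i. n - k < i) t)) @ map E (sorted_list_of_set S)"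
    by simp
  also have "\<dots> \<approx> replicate k Y @ map E (sorted_list_of_set S)"
    by (rule cong_append_right[OF _ cong_Y_pow_map_E]) (use assms S False in auto)
  finally have reduced: "replicate k Y @ map E t \<approx> replicate k Y @ map E (sorted_list_of_set S)" .
  show ?thesis
  proof (cases "S = {1..n - k}")
    case True
    then have "replicate k Y @ map E (sorted_list_of_set S) \<approx> zero_word"
      using cong_Y_pow_lower_zero_word[of k] assms False
      by (simp add: sorted_list_of_set_atLeastAtMost)
    then show ?thesis
      using reduced zero_word_in_normal_forms by (blast intro: cong_trans)
  next
    case False
    have "k < n"
      using False S assms by (cases "k = n") auto
    with False S \<open>k \<noteq> 0\<close> have "replicate k Y @ map E (sorted_list_of_set S) \<in> normal_forms"
      unfolding normal_forms_def by blast
    then show ?thesis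
      using reduced by blast
  qed
qed

lemma cong_normal_form_trans:
  "u \<approx> v \<Longrightarrow> \<exists>w \<in> normal_forms. v \<approx> w \<Longrightarrow> \<exists>w \<in> normal_forms. u \<approx> w"
  by (blast intro: cong_trans)

lemma cong_X_pow_snoc_normal_form:
  assumes "k < n" "set s \<subseteq> {1..n}" "c \<in> alphabet n"
  shows "\<exists>w \<in> normal_forms. replicate k X @ map E s @ [c] \<approx> w"
proof -
  let ?up = "map Suc (filter (\<lambda>i. i < n) s)" and ?down = "map (\<lambda>i. i - 1) (filter (\<lambda>i. 1 < i) s)"
  have up: "set ?up \<subseteq> {1..n}" and down: "set ?down \<subseteq> {1..n}"
    using assms(2) by (rule set_map_Suc_filter_less, rule set_map_pred_filter_greater)
  from assms(3) consider "c = X" | "c = Y" | i where "c = E i" "1 \<le> i" "i \<le> n"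
    by (cases c) auto
  then show ?thesis
  proof cases
    case 1
    have "replicate k X @ map E s @ [c] \<approx> replicate k X @ X # map E ?up"
      using cong_append_left[OF _ cong_map_E_X[OF assms(2)]] 1 by simp
    moreover have "\<exists>w \<in> normal_forms. replicate (Suc k) X @ map E ?up \<approx> w"
      using assms(1) up by (intro cong_X_pow_normal_form) auto
    ultimately show ?thesis
      by (simp add: replicate_app_Cons_same cong_normal_form_trans)
  next
    case 2
    have Y: "replicate k X @ map E s @ [c] \<approx> replicate k X @ Y # map E ?down"
      using cong_append_left[OF _ cong_map_E_Y[OF assms(2)]] 2 by simp
    show ?thesis
    proof (cases k)
      case 0
      have "\<exists>w \<in> normal_forms. replicate 1 Y @ map E ?down \<approx> w"
        using down two_le_n by (intro cong_Y_pow_normal_form) auto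
      with Y 0 show ?thesis
        by (simp add: cong_normal_form_trans)
    next
      case (Suc m)
      have "replicate k X @ Y # map E ?down = replicate m X @ [X, Y] @ map E ?down"
        by (simp add: Suc replicate_app_Cons_same)
      also have "\<dots> \<approx> replicate m X @ [E n] @ map E ?down"
        using down[folded map_E_in_lists]
        by (intro cong_append_left[OF _ cong_append_right[OF _ cong_XY]]) simp_all
      finally have "replicate k X @ map E s @ [c] \<approx> replicate m X @ map E (n # ?down)"
        using Y by (simp add: cong_trans)
      moreover have "\<exists>w \<in> normal_forms. replicate m X @ map E (n # ?down) \<approx> w"
        using down assms(1) Suc by (intro cong_X_pow_normal_form) auto
      ultimately show ?thesis
        by (rule cong_normal_form_trans)
    qed
  next
    case 3
    then show ?thesis
      using assms(1,2) cong_X_pow_normal_form[of k "s @ [i]"] by auto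
  qed
qed

lemma cong_Y_pow_snoc_normal_form:
  assumes "0 < k" "k < n" "set s \<subseteq> {1..n}" "c \<in> alphabet n"
  shows "\<exists>w \<in> normal_forms. replicate k Y @ map E s @ [c] \<approx> w"
proof -
  let ?up = "map Suc (filter (\<lambda>i. i < n) s)" and ?down = "map (\<lambda>i. i - 1) (filter (\<lambda>i. 1 < i) s)"
  have up: "set ?up \<subseteq> {1..n}" and down: "set ?down \<subseteq> {1..n}"
    using assms(3) by (rule set_map_Suc_filter_less, rule set_map_pred_filter_greater)
  from assms(4) consider "c = X" | "c = Y" | i where "c = E i" "1 \<le> i" "i \<le> n"
    by (cases c) auto
  then show ?thesis
  proof cases
    case 1
    obtain m where m: "k = Suc m"
      using assms(1) by (cases k) auto
    have "replicate k Y @ map E s @ [c] \<approx> replicate k Y @ X # map E ?up"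
      using cong_append_left[OF _ cong_map_E_X[OF assms(3)]] 1 by simp
    also have "\<dots> = replicate m Y @ [Y, X] @ map E ?up"
      by (simp add: m replicate_app_Cons_same)
    also have "\<dots> \<approx> replicate m Y @ [E 1] @ map E ?up"
      using up[folded map_E_in_lists]
      by (intro cong_append_left[OF _ cong_append_right[OF _ cong_YX]]) simp_all
    finally have "replicate k Y @ map E s @ [c] \<approx> replicate m Y @ map E (1 # ?up)"
      by simp
    moreover have "\<exists>w \<in> normal_forms. replicate m Y @ map E (1 # ?up) \<approx> w"
      using up assms(2) m by (intro cong_Y_pow_normal_form) auto
    ultimately show ?thesis
      by (rule cong_normal_form_trans)
  next
    case 2
    have "replicate k Y @ map E s @ [c] \<approx> replicate k Y @ Y # map E ?down"
      using cong_append_left[OF _ cong_map_E_Y[OF assms(3)]] 2 by simp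
    moreover have "\<exists>w \<in> normal_forms. replicate (Suc k) Y @ map E ?down \<approx> w"
      using down assms(2) by (intro cong_Y_pow_normal_form) auto
    ultimately show ?thesis
      by (simp add: replicate_app_Cons_same cong_normal_form_trans)
  next
    case 3
    then show ?thesis
      using assms(2,3) cong_Y_pow_normal_form[of k "s @ [i]"] by auto
  qed
qed

lemma cong_normal_form: "w \<in> lists (alphabet n) \<Longrightarrow> \<exists>w' \<in> normal_forms. w \<approx> w'"
proof (induction w rule: rev_induct)
  case Nil
  then show ?case
    using cong_X_pow_normal_form[of 0 "[]"] by simp
next
  case (snoc c w)
  then obtain w' where "w' \<in> normal_forms" "w \<approx> w'"
    by auto
  then have "w @ [c] \<approx> w' @ [c]"
    using snoc.prems by (intro cong_append_right) simp_all
  moreover have "\<exists>w'' \<in> normal_forms. w' @ [c] \<approx> w''"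
    using \<open>w' \<in> normal_forms\<close> snoc.prems
    by (cases rule: normal_formsE) (simp_all add: cong_X_pow_snoc_normal_form cong_Y_pow_snoc_normal_form)
  ultimately show ?case
    by (rule cong_normal_form_trans)
qed

definition shift_up :: "nat \<Rightarrow> nat set \<Rightarrow> (nat \<rightharpoonup> nat)" where
  "shift_up k S = (\<lambda>i. if 1 \<le> i \<and> i + k \<le> n \<and> i + k \<notin> S then Some (i + k) else None)"

definition shift_down :: "nat \<Rightarrow> nat set \<Rightarrow> (nat \<rightharpoonup> nat)" where
  "shift_down k S = (\<lambda>i. if k < i \<and> i \<le> n \<and> i - k \<notin> S then Some (i - k) else None)"

lemma word_eval_X_pow_map_E: "word_eval n (replicate k X @ map E l) = shift_up k (set l)"
proof (induction l rule: rev_induct)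
  case Nil
  show ?case
  proof (induction k)
    case 0
    then show ?case by (auto simp: word_eval_def pid_def shift_up_def)
  next
    case (Suc k)
    then show ?case
      using word_eval_snoc[of n "replicate k X" X]
      by (auto simp: replicate_append_same[symmetric] fun_eq_iff map_comp_def shift_up_def tx_def)
  qed
next
  case (snoc a l)
  then show ?case
    using word_eval_snoc[of n "replicate k X @ map E l" "E a"]
    by (auto simp: fun_eq_iff map_comp_def shift_up_def te_def)
qed

lemma word_eval_Y_pow_map_E: "word_eval n (replicate k Y @ map E l) = shift_down k (set l)"
proof (induction l rule: rev_induct)
  case Nil
  show ?case
  proof (induction k)
    case 0
    then show ?case by (auto simp: word_eval_def pid_def shift_down_def)
  next
    case (Suc k)
    then show ?case
      using word_eval_snoc[of n "replicate k Y" Y]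
      by (auto simp: replicate_append_same[symmetric] fun_eq_iff map_comp_def shift_down_def ty_def)
  qed
next
  case (snoc a l)
  then show ?case
    using word_eval_snoc[of n "replicate k Y @ map E l" "E a"]
    by (auto simp: fun_eq_iff map_comp_def shift_down_def te_def)
qed

lemma shift_up_in_OCI: "k < n \<Longrightarrow> shift_up k S \<in> OCI n"
proof -
  assume "k < n"
  have "shift_up k S = (\<lambda>i. if i \<in> {i. 1 \<le> i \<and> i + k \<le> n \<and> i + k \<notin> S} then Some (gpow n k i) else None)"
    by (auto simp: fun_eq_iff shift_up_def gpow_eq_add)
  also have "\<dots> \<in> OCI n"
    using \<open>k < n\<close> by (intro restrict_gpow_in_OCI) (auto simp: gpow_eq_add)
  finally show ?thesis .
qed

lemma shift_down_in_OCI: "0 < k \<Longrightarrow> k < n \<Longrightarrow> shift_down k S \<in> OCI n"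
proof -
  assume "0 < k" "k < n"
  have gpow: "gpow n (n - k) i = i - k" if "k < i" "i \<le> n" for i
    using that \<open>0 < k\<close> \<open>k < n\<close> by (subst gpow_eq_add_sub) auto
  have "shift_down k S = (\<lambda>i. if i \<in> {i. k < i \<and> i \<le> n \<and> i - k \<notin> S} then Some (gpow n (n - k) i) else None)"
    by (auto simp: fun_eq_iff shift_down_def gpow)
  also have "\<dots> \<in> OCI n"
    using \<open>0 < k\<close> \<open>k < n\<close> by (intro restrict_gpow_in_OCI) (auto simp: gpow)
  finally show ?thesis .
qed

lemma word_eval_normal_form_in_OCI: "w \<in> normal_forms \<Longrightarrow> word_eval n w \<in> OCI n"
  by (cases rule: normal_formsE)
    (auto simp: word_eval_X_pow_map_E word_eval_Y_pow_map_E shift_up_in_OCI shift_down_in_OCI)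

lemma shift_up_inject:
  assumes eq: "shift_up k S = shift_up k' S'"
    and "S \<subseteq> {Suc k..n}" "S' \<subseteq> {Suc k'..n}"
    and "0 < k \<longrightarrow> S \<noteq> {Suc k..n}" "0 < k' \<longrightarrow> S' \<noteq> {Suc k'..n}"
  shows "k = k' \<and> S = S'"
proof -
  have same_shift: "k = k'"
    if "shift_up k S = shift_up k' S'" "S \<subseteq> {Suc k..n}" "S \<noteq> {Suc k..n}" for k k' S S'
  proof -
    from that(2,3) obtain j where "j \<in> {Suc k..n}" "j \<notin> S"
      by blast
    then have "shift_up k' S' (j - k) = Some j"
      using that(1)[symmetric] by (auto simp: shift_up_def)
    with \<open>j \<in> {Suc k..n}\<close> show ?thesis
      by (auto simp: shift_up_def split: if_splits)
  qed
  have "k = k'"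
  proof (cases "0 < k")
    case True
    with same_shift[OF eq] assms(2,4) show ?thesis
      by blast
  next
    case False
    with same_shift[OF eq[symmetric]] assms(3,5) show ?thesis
      by (cases "0 < k'") auto
  qed
  moreover have recover: "S = {j. k < j \<and> j \<le> n \<and> shift_up k S (j - k) = None}"
    if "S \<subseteq> {Suc k..n}" for k S
    using that by (auto simp: shift_up_def subset_iff)
  ultimately show ?thesis
    using recover[OF assms(2)] recover[OF assms(3)] eq by simp
qed

lemma shift_down_inject:
  assumes eq: "shift_down k S = shift_down k' S'"
    and "S \<subseteq> {1..n - k}" "S' \<subseteq> {1..n - k'}" "S \<noteq> {1..n - k}" "S' \<noteq> {1..n - k'}"
  shows "k = k' \<and> S = S'"
proof -
  have le_shift: "k' \<le> k"
    if "shift_down k S = shift_down k' S'" "S \<subseteq> {1..n - k}" "S \<noteq> {1..n - k}" for k k' S S'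
  proof -
    from that(2,3) obtain j where "j \<in> {1..n - k}" "j \<notin> S"
      by blast
    then have "shift_down k' S' (j + k) = Some j"
      using that(1)[symmetric] by (auto simp: shift_down_def)
    then show ?thesis
      by (auto simp: shift_down_def split: if_splits)
  qed
  have "k = k'"
    using le_shift[OF eq assms(2,4)] le_shift[OF eq[symmetric] assms(3,5)] by simp
  moreover have recover: "S = {j. 1 \<le> j \<and> j + k \<le> n \<and> shift_down k S (j + k) = None}"
    if "S \<subseteq> {1..n - k}" for k S
    using that by (auto simp: shift_down_def subset_iff)
  ultimately show ?thesis
    using recover[OF assms(2)] recover[OF assms(3)] eq by simp
qed

lemma shift_up_neq_shift_down:
  assumes "0 < k'" "S' \<subseteq> {1..n - k'}" "S' \<noteq> {1..n - k'}"
  shows "shift_up k S \<noteq> shift_down k' S'"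
proof
  assume eq: "shift_up k S = shift_down k' S'"
  from assms(2,3) obtain j where "j \<in> {1..n - k'}" "j \<notin> S'"
    by blast
  then have "1 \<le> j" "j \<le> n - k'"
    by auto
  then have "j + k' \<le> n"
    by arith
  with \<open>1 \<le> j\<close> \<open>j \<notin> S'\<close> \<open>0 < k'\<close> have "shift_up k S (j + k') = Some j"
    by (simp add: eq shift_down_def)
  with \<open>0 < k'\<close> show False
    by (auto simp: shift_up_def split: if_splits)
qed

lemma normal_forms_valueE:
  assumes "w \<in> normal_forms"
  obtains (X_pow) k S where "w = replicate k X @ map E (sorted_list_of_set S)"
      "S \<subseteq> {Suc k..n}" "0 < k \<longrightarrow> S \<noteq> {Suc k..n}" "word_eval n w = shift_up k S"
  | (Y_pow) k S where "w = replicate k Y @ map E (sorted_list_of_set S)"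
      "0 < k" "S \<subseteq> {1..n - k}" "S \<noteq> {1..n - k}" "word_eval n w = shift_down k S"
proof -
  have finite: "finite S" if "S \<subseteq> {a..b::nat}" for S a b
    using that by (rule finite_subset) simp
  from assms show thesis
    unfolding normal_forms_def
  proof (elim UnE CollectE exE conjE)
    fix k S
    assume "w = replicate k X @ map E (sorted_list_of_set S)" "S \<subseteq> {Suc k..n}"
      "0 < k \<longrightarrow> S \<noteq> {Suc k..n}"
    with finite[of S] show thesis
      by (intro X_pow[of k S]) (simp_all add: word_eval_X_pow_map_E)
  next
    fix k S
    assume "w = replicate k Y @ map E (sorted_list_of_set S)" "0 < k" "S \<subseteq> {1..n - k}"
      "S \<noteq> {1..n - k}"
    with finite[of S] show thesis
      by (intro Y_pow[of k S]) (simp_all add: word_eval_Y_pow_map_E)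
  qed
qed

lemma inj_on_word_eval_normal_forms: "inj_on (word_eval n) normal_forms"
proof (rule inj_onI)
  fix w w'
  assume "w \<in> normal_forms" "w' \<in> normal_forms" and eq: "word_eval n w = word_eval n w'"
  from \<open>w \<in> normal_forms\<close> show "w = w'"
  proof (cases rule: normal_forms_valueE)
    case (X_pow k S)
    note w = this
    from \<open>w' \<in> normal_forms\<close> show ?thesis
    proof (cases rule: normal_forms_valueE)
      case (X_pow k' S')
      with w eq show ?thesis
        using shift_up_inject[of k S k' S'] by simp
    next
      case (Y_pow k' S')
      with w(4) eq show ?thesis
        using shift_up_neq_shift_down[of k' S' k S] by simp
    qed
  next
    case (Y_pow k S)
    note w = this
    from \<open>w' \<in> normal_forms\<close> show ?thesis
    proof (cases rule: normal_forms_valueE)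
      case (X_pow k' S')
      with w(2-5) eq show ?thesis
        using shift_up_neq_shift_down[of k S k' S'] by simp
    next
      case (Y_pow k' S')
      with w eq show ?thesis
        using shift_down_inject[of k S k' S'] by simp
    qed
  qed
qed

lemma OCI_eq_shift:
  assumes "a \<in> OCI n"
  obtains (up) k S where "k < n" "S \<subseteq> {1..n}" "a = shift_up k S"
    | (down) k S where "k \<le> n" "S \<subseteq> {1..n}" "a = shift_down k S"
proof -
  from assms obtain k where "k < n" and a: "a = (\<lambda>i. if i \<in> dom a then Some (gpow n k i) else None)"
    by (auto simp: OCI_def CI_def CycGrp_def)
  moreover have "dom a \<subseteq> {1..n}"
    using assms by (simp add: OCI_def CI_def SymInv_def)
  moreover have "\<forall>i \<in> dom a. \<forall>j \<in> dom a. i \<le> j \<longrightarrow> the (a i) \<le> the (a j)"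
    using assms by (simp add: OCI_def)
  then have mono: "\<forall>i \<in> dom a. \<forall>j \<in> dom a. i \<le> j \<longrightarrow> gpow n k i \<le> gpow n k j"
    by (subst (asm) (1 2) a) simp
  define D where "D = dom a"
  have D: "D \<subseteq> {1..n}"
    using \<open>dom a \<subseteq> {1..n}\<close> by (simp add: D_def)
  have a_eq: "a i = (if i \<in> D then Some (gpow n k i) else None)" for i
    unfolding D_def by (subst a) simp
  from gpow_monotone_no_wrap[OF \<open>k < n\<close> D mono[folded D_def]] show thesis
  proof
    assume no_wrap: "\<forall>i \<in> D. i + k \<le> n"
    have "a = shift_up k {j. k < j \<and> j \<le> n \<and> j - k \<notin> D}"
      using D no_wrap by (auto simp: fun_eq_iff a_eq shift_up_def gpow_eq_add subset_iff)
    then show thesis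
      using \<open>k < n\<close> by (intro up) auto
  next
    assume wrap: "\<forall>i \<in> D. n < i + k"
    have "a = shift_down (n - k) {j. 1 \<le> j \<and> j + (n - k) \<le> n \<and> j + (n - k) \<notin> D}"
      using D wrap \<open>k < n\<close> by (auto simp: fun_eq_iff a_eq shift_down_def gpow_eq_add_sub subset_iff)
    then show thesis
      by (intro down) auto
  qed
qed

lemma OCI_subset_word_eval: "OCI n \<subseteq> word_eval n ` lists (alphabet n)"
proof
  fix a
  assume "a \<in> OCI n"
  then show "a \<in> word_eval n ` lists (alphabet n)"
  proof (cases rule: OCI_eq_shift)
    case (up k S)
    then have "a = word_eval n (replicate k X @ map E (sorted_list_of_set S))"
      using finite_subset[of S "{1..n}"] by (simp add: word_eval_X_pow_map_E)
    moreover have "replicate k X @ map E (sorted_list_of_set S) \<in> lists (alphabet n)"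
      using up finite_subset[of S "{1..n}"] by simp
    ultimately show ?thesis
      by blast
  next
    case (down k S)
    then have "a = word_eval n (replicate k Y @ map E (sorted_list_of_set S))"
      using finite_subset[of S "{1..n}"] by (simp add: word_eval_Y_pow_map_E)
    moreover have "replicate k Y @ map E (sorted_list_of_set S) \<in> lists (alphabet n)"
      using down finite_subset[of S "{1..n}"] by simp
    ultimately show ?thesis
      by blast
  qed
qed

end

theorem theorem2p16:
  fixes n :: nat
  assumes "n \<ge> 2"
  shows "is_presentation (alphabet n) (relsU n) (letter_map n) (word_eval n) (OCI n)
         \<and> card (alphabet n) = n + 2
         \<and> 2 * card (relsU n) = n^2 + 3*n + 8"
proof -
  interpret oci_presentation n
    using assms by unfold_locales
  have "is_presentation (alphabet n) (relsU n) (letter_map n) (word_eval n) (OCI n)"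
  proof (rule is_presentationI_normal_forms)
    show "relsU n \<subseteq> lists (alphabet n) \<times> lists (alphabet n)"
      by (rule relsU_in_lists)
    show "inj_on (letter_map n) (alphabet n)"
      using assms by (rule inj_on_letter_map)
    show "word_eval n u = word_eval n v" if "u \<approx> v" for u v
      using assms that by (intro word_eval_gen_cong) auto
    show "\<exists>w' \<in> normal_forms. w \<approx> w'" if "w \<in> lists (alphabet n)" for w
      using that by (rule cong_normal_form)
    show "inj_on (word_eval n) normal_forms"
      by (rule inj_on_word_eval_normal_forms)
    show "word_eval n ` normal_forms \<subseteq> OCI n"
      using word_eval_normal_form_in_OCI by blast
    show "OCI n \<subseteq> word_eval n ` lists (alphabet n)"
      by (rule OCI_subset_word_eval)
  qed
  with card_alphabet card_relsU[OF assms] show ?thesis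
    by simp
qed

end
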